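(* Let $d$ be a thin dimension vector with $e(d)=1$, let $b=b_1$ be the last position of the unique internal even string of ones, and let $J=J(d)$, $c=\max J$ and $T=\Delta(J)$. Let $\phi^{b-1}:P(b)\to P(b-1)$ be the unique homomorphism sending the last basis vector of $P(b)_t$ to the last basis vector of $P(b-1)_t$, and $\phi^{b}:P(b)\to P(c)$ the unique homomorphism sending the last basis vector $e_r$ of $P(b)_t=k^r$ to $e_r\in P(c)_t$. Then $\psi=(\phi^{b-1},\phi^b):P(b)\to P(b-1)\oplus P(c)$ is injective and its cokernel is isomorphic to $T$; that is, $0\to P(b)\xrightarrow{\psi}P(b-1)\oplus P(c)\to T\to 0$ is a projective resolution of $T$.
   Context: Let $k$ be an algebraically closed field. A thin dimension vector is $d=(d_1,\dots,d_t)\in\{0,1\}^t$ with $d_1=d_t=1$ and no two consecutive entries equal to $0$. Write its entries as maximal strings of consecutive ones of lengths $a_0,a_1,\dots,a_{r+1}$ (in order, separated by single zeros); the strings of lengths $a_1,\dots,a_r$ are called internal, and $e(d)=\#\{1\le i\le r: a_i\text{ even}\}$. Let $b_1<\dots<b_{e(d)}$ be the positions of the last entries of the internal strings of even length. Define $J(d)$ as the set of $j\in\{1,\dots,t\}$ such that either $j\le b_1-1$ and $j\equiv b_1-1\pmod 2$; or $b_i+2\le j\le b_{i+1}-1$ and $j\equiv b_i \pmod 2$ for some $1\le i<e(d)$; or $j\ge b_{e(d)}+2$ and $j\equiv b_{e(d)}\pmod 2$. $\mathcal A_{t,1}$ is the quotient of the path algebra over $k$ of the quiver with vertices $1,\dots,t$,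 arrows $\alpha_i:i\to i+1$ ($1\le i\le t-1$) and $\beta_j:j+2\to j$ ($1\le j\le t-2$), by the relations $\beta_1\alpha_2=0$ and $\beta_{i+1}\alpha_{i+2}=\alpha_i\beta_i$ for $1\le i\le t-3$ (compositions right to left); modules are representations satisfying these relations. A subset $J\subseteq\{1,\dots,t\}$ is standard if $j\in J\Rightarrow j+1\notin J$. For nonempty standard $J$, $\Delta(J)_i=k^{l}$ with $l=\#\{j\in J: j\le i\}$ and basis $e_1,\dots,e_l$; $\alpha_i$ is the inclusion $e_h\mapsto e_h$, and $\beta_j(e_h)=e_{h-1}$ for $h\ge 2$, $\beta_j(e_1)=0$. Put $\Delta(i)=\Delta(\{i\})$ and $P(i)=\Delta(\{i': 1\le i'\le i,\ i'\equiv i\pmod 2\})$; $P(i)$ is the projective cover of $\Delta(i)$. *)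

theory Defs
  imports "HOL-Computational_Algebra.Polynomial"
begin

text \<open>A dimension vector d is a function on positions 1..t (values outside are ignored).\<close>
definition thin_dimvec :: "nat \<Rightarrow> (nat \<Rightarrow> nat) \<Rightarrow> bool" where
  "thin_dimvec t d \<longleftrightarrow> t \<ge> 1 \<and> (\<forall>i\<in>{1..t}. d i \<in> {0,1}) \<and> d 1 = 1 \<and> d t = 1 \<and>
     (\<forall>i. 1 \<le> i \<and> i < t \<longrightarrow> \<not> (d i = 0 \<and> d (i+1) = 0))"

text \<open>Last positions of the internal maximal strings of ones of even length
  (internal = neither the first nor the last string, i.e. preceded and followed by a zero).\<close>
definition internal_even_ends :: "nat \<Rightarrow> (nat \<Rightarrow> nat) \<Rightarrow> nat set" where
  "internal_even_ends t d = {e. \<exists>s. 1 < s \<and> s \<le> e \<and> e < t \<and> (\<forall>i\<in>{s..e}. d i = 1) \<and>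
      d (s - 1) = 0 \<and> d (e + 1) = 0 \<and> even (e - s + 1)}"

definition e_num :: "nat \<Rightarrow> (nat \<Rightarrow> nat) \<Rightarrow> nat" where
  "e_num t d = card (internal_even_ends t d)"

definition b_pos :: "nat \<Rightarrow> (nat \<Rightarrow> nat) \<Rightarrow> nat \<Rightarrow> nat" where
  "b_pos t d i = sorted_list_of_set (internal_even_ends t d) ! (i - 1)"

definition J_set :: "nat \<Rightarrow> (nat \<Rightarrow> nat) \<Rightarrow> nat set" where
  "J_set t d = (let e = e_num t d; b = b_pos t d in
     {j \<in> {1..t}.
        (e \<ge> 1 \<and> j \<le> b 1 - 1 \<and> j mod 2 = (b 1 - 1) mod 2)
      \<or> (\<exists>i. 1 \<le> i \<and> i < e \<and> b i + 2 \<le> j \<and> j \<le> b (i+1) - 1 \<and> j mod 2 = b i mod 2)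
      \<or> (e \<ge> 1 \<and> j \<ge> b e + 2 \<and> j mod 2 = b e mod 2)})"

text \<open>Vectors of k^n are functions nat \<Rightarrow> k supported on coordinates 1..n
  (coordinate h is the coefficient of the basis vector e_h).\<close>
type_synonym 'k vec = "nat \<Rightarrow> 'k"

definition space :: "nat \<Rightarrow> ('k::zero) vec set" where
  "space n = {v. \<forall>h. (h = 0 \<or> n < h) \<longrightarrow> v h = 0}"

definition basis_vec :: "nat \<Rightarrow> ('k::{zero,one}) vec" where
  "basis_vec h = (\<lambda>x. if x = h then 1 else 0)"

definition linear_on :: "nat \<Rightarrow> nat \<Rightarrow> (('k::field) vec \<Rightarrow> 'k vec) \<Rightarrow> bool" where
  "linear_on m n f \<longleftrightarrow> (\<forall>v\<in>space m. f v \<in> space n) \<and>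
     (\<forall>u\<in>space m. \<forall>v\<in>space m. f (\<lambda>h. u h + v h) = (\<lambda>h. f u h + f v h)) \<and>
     (\<forall>c. \<forall>v\<in>space m. f (\<lambda>h. c * v h) = (\<lambda>h. c * f v h))"

text \<open>A representation of the quiver of A_{t,1}: dimension at each vertex, the maps
  alpha_i : i \<rightarrow> i+1 and beta_j : j+2 \<rightarrow> j.\<close>
record 'k rep =
  rdim :: "nat \<Rightarrow> nat"
  ralpha :: "nat \<Rightarrow> 'k vec \<Rightarrow> 'k vec"
  rbeta :: "nat \<Rightarrow> 'k vec \<Rightarrow> 'k vec"

definition rep_hom :: "nat \<Rightarrow> ('k::field) rep \<Rightarrow> 'k rep \<Rightarrow> (nat \<Rightarrow> 'k vec \<Rightarrow> 'k vec) \<Rightarrow> bool" where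
  "rep_hom t M N f \<longleftrightarrow>
     (\<forall>i\<in>{1..t}. linear_on (rdim M i) (rdim N i) (f i)) \<and>
     (\<forall>i. 1 \<le> i \<and> i + 1 \<le> t \<longrightarrow> (\<forall>v\<in>space (rdim M i).
         f (i+1) (ralpha M i v) = ralpha N i (f i v))) \<and>
     (\<forall>j. 1 \<le> j \<and> j + 2 \<le> t \<longrightarrow> (\<forall>v\<in>space (rdim M (j+2)).
         f j (rbeta M j v) = rbeta N j (f (j+2) v)))"

definition hom_injective :: "nat \<Rightarrow> ('k::field) rep \<Rightarrow> (nat \<Rightarrow> 'k vec \<Rightarrow> 'k vec) \<Rightarrow> bool" where
  "hom_injective t M f \<longleftrightarrow> (\<forall>i\<in>{1..t}. inj_on (f i) (space (rdim M i)))"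

definition hom_surjective :: "nat \<Rightarrow> ('k::field) rep \<Rightarrow> 'k rep \<Rightarrow> (nat \<Rightarrow> 'k vec \<Rightarrow> 'k vec) \<Rightarrow> bool" where
  "hom_surjective t M N f \<longleftrightarrow> (\<forall>i\<in>{1..t}. f i ` space (rdim M i) = space (rdim N i))"

definition exact_at :: "nat \<Rightarrow> ('k::field) rep \<Rightarrow> 'k rep \<Rightarrow>
    (nat \<Rightarrow> 'k vec \<Rightarrow> 'k vec) \<Rightarrow> (nat \<Rightarrow> 'k vec \<Rightarrow> 'k vec) \<Rightarrow> bool" where
  "exact_at t L M f g \<longleftrightarrow>
     (\<forall>i\<in>{1..t}. {v \<in> space (rdim M i). g i v = (\<lambda>_. 0)} = f i ` space (rdim L i))"

definition vleft :: "nat \<Rightarrow> ('k::zero) vec \<Rightarrow> 'k vec" where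
  "vleft m w = (\<lambda>h. if 1 \<le> h \<and> h \<le> m then w h else 0)"
definition vright :: "nat \<Rightarrow> ('k::zero) vec \<Rightarrow> 'k vec" where
  "vright m w = (\<lambda>h. if 1 \<le> h then w (h + m) else 0)"
definition vconcat :: "nat \<Rightarrow> ('k::zero) vec \<Rightarrow> 'k vec \<Rightarrow> 'k vec" where
  "vconcat m u v = (\<lambda>h. if h = 0 then 0 else if h \<le> m then u h else v (h - m))"

definition dsum :: "('k::zero) rep \<Rightarrow> 'k rep \<Rightarrow> 'k rep" where
  "dsum M N = \<lparr> rdim = (\<lambda>i. rdim M i + rdim N i),
     ralpha = (\<lambda>i w. vconcat (rdim M (i+1))
                 (ralpha M i (vleft (rdim M i) w)) (ralpha N i (vright (rdim M i) w))),
     rbeta = (\<lambda>j w. vconcat (rdim M j)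
                 (rbeta M j (vleft (rdim M (j+2)) w)) (rbeta N j (vright (rdim M (j+2)) w))) \<rparr>"

definition hom_pair :: "('k::zero) rep \<Rightarrow> (nat \<Rightarrow> 'k vec \<Rightarrow> 'k vec) \<Rightarrow> (nat \<Rightarrow> 'k vec \<Rightarrow> 'k vec)
     \<Rightarrow> nat \<Rightarrow> 'k vec \<Rightarrow> 'k vec" where
  "hom_pair M f g = (\<lambda>i v. vconcat (rdim M i) (f i v) (g i v))"

definition Delta :: "nat set \<Rightarrow> ('k::field) rep" where
  "Delta J = \<lparr> rdim = (\<lambda>i. card {j \<in> J. j \<le> i}),
     ralpha = (\<lambda>i v. v),
     rbeta = (\<lambda>j v. (\<lambda>h. if h = 0 then 0 else v (h + 1))) \<rparr>"

definition Proj :: "nat \<Rightarrow> ('k::field) rep" where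
  "Proj i = Delta {i'. 1 \<le> i' \<and> i' \<le> i \<and> i' mod 2 = i mod 2}"

definition alg_closed_type :: "'k::field itself \<Rightarrow> bool" where
  "alg_closed_type _ \<longleftrightarrow> (\<forall>p :: 'k poly. 0 < degree p \<longrightarrow> (\<exists>x. poly p x = 0))"

end

theory Submission
  imports Defs
begin

text \<open>
  Write \<delta> = b mod 2, A = {b-1, b-3, ...}, B = {b, b-2, ...} and E = {b+2, b+4, ..., c}, so that
  P(b-1) = \<Delta>(A), P(b) = \<Delta>(B), P(c) = \<Delta>(B \<union> E) and J = A \<union> E.
  Homomorphisms between modules \<Delta>(S) commute with the inclusions \<alpha> and with the shift \<beta>;
  as B has no element above t - 2, a homomorphism out of P(b) is therefore determined by the image of
  the top basis vector, which forces \<phi>^(b-1) to be the shift by \<delta> and \<phi>^b to be the inclusion.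
  The cokernel map is (u, w) \<mapsto> shift_\<delta> w - u from P(b-1) \<oplus> P(c) to T.
  At a vertex i, let e be the number of elements of E up to i: then dim P(c)_i = dim P(b)_i + e,
  dim T_i = dim P(b-1)_i + e and dim P(b)_i \<le> dim P(b-1)_i + \<delta>, with equality when e > 0;
  these counts make the sequence exact at every vertex.
\<close>

section \<open>Coordinate vectors and linear maps\<close>

definition vshift :: "nat \<Rightarrow> 'k::zero vec \<Rightarrow> 'k vec" where
  "vshift k v = (\<lambda>h. if h = 0 then 0 else v (h + k))"

lemma space_zero: "v \<in> space n \<Longrightarrow> v 0 = 0"
  by (simp add: space_def)

lemma space_mono: "v \<in> space m \<Longrightarrow> m \<le> n \<Longrightarrow> v \<in> space n"
  by (auto simp: space_def)

lemma vshift_in_space: "v \<in> space m \<Longrightarrow> m \<le> n + k \<Longrightarrow> vshift k v \<in> space n"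
  by (auto simp: space_def vshift_def)

lemma vshift_at_0 [simp]: "vshift k v 0 = 0"
  by (simp add: vshift_def)

lemma vshift_vshift: "vshift j (vshift k v) = vshift (j + k) v"
  by (auto simp: vshift_def add.assoc)

lemma vshift_0: "v \<in> space n \<Longrightarrow> vshift 0 v = v"
  by (auto simp: space_def vshift_def)

lemma vshift_basis_vec: "1 \<le> h \<Longrightarrow> vshift k (basis_vec (h + k)) = basis_vec h"
  by (auto simp: vshift_def basis_vec_def)

lemma vshift_add: "vshift k (\<lambda>h. u h + v h) = (\<lambda>h. vshift k u h + vshift k v h)"
  and vshift_diff: "vshift k (\<lambda>h. u h - v h) = (\<lambda>h. vshift k u h - vshift k v h)"
  and vshift_scale: "vshift k (\<lambda>h. c * v h) = (\<lambda>h. c * vshift k v h)"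
  for u v :: "'k::comm_ring vec"
  by (simp_all add: vshift_def fun_eq_iff)

lemma vleft_vconcat: "u \<in> space m \<Longrightarrow> vleft m (vconcat m u w) = u"
  by (rule ext) (auto simp: vleft_def vconcat_def space_def Suc_le_eq)

lemma vright_vconcat: "w 0 = 0 \<Longrightarrow> vright m (vconcat m u w) = w"
  by (rule ext) (auto simp: vright_def vconcat_def Suc_le_eq)

lemma vconcat_vleft_vright: "x 0 = 0 \<Longrightarrow> vconcat m (vleft m x) (vright m x) = x"
  by (rule ext) (auto simp: vleft_def vright_def vconcat_def)

lemma vleft_in_space: "vleft m x \<in> space m"
  by (simp add: vleft_def space_def)

lemma vright_in_space: "x \<in> space (m + n) \<Longrightarrow> vright m x \<in> space n"
  by (auto simp: vright_def space_def)

lemma vconcat_in_space: "u \<in> space m \<Longrightarrow> w \<in> space n \<Longrightarrow> vconcat m u w \<in> space (m + n)"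
  by (auto simp: vconcat_def space_def)

lemma vleft_add: "vleft m (\<lambda>h. u h + v h) = (\<lambda>h. vleft m u h + vleft m v h)"
  and vleft_scale: "vleft m (\<lambda>h. c * v h) = (\<lambda>h. c * vleft m v h)"
  and vright_add: "vright m (\<lambda>h. u h + v h) = (\<lambda>h. vright m u h + vright m v h)"
  and vright_scale: "vright m (\<lambda>h. c * v h) = (\<lambda>h. c * vright m v h)"
  and vconcat_add: "vconcat m (\<lambda>h. u h + u' h) (\<lambda>h. w h + w' h) = (\<lambda>h. vconcat m u w h + vconcat m u' w' h)"
  and vconcat_scale: "vconcat m (\<lambda>h. c * u h) (\<lambda>h. c * w h) = (\<lambda>h. c * vconcat m u w h)"
  for u u' v w w' :: "'k::comm_ring vec"
  by (simp_all add: vleft_def vright_def vconcat_def fun_eq_iff)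

lemma linear_on_comp:
  "linear_on m n F \<Longrightarrow> linear_on n p G \<Longrightarrow> linear_on m p (G \<circ> F)"
  by (simp add: linear_on_def)

lemma linear_on_diff:
  fixes F G :: "'k::field vec \<Rightarrow> 'k vec"
  shows "linear_on m n F \<Longrightarrow> linear_on m n G \<Longrightarrow> linear_on m n (\<lambda>x h. G x h - F x h)"
  by (simp add: linear_on_def space_def fun_eq_iff algebra_simps)

lemma linear_on_vconcat:
  fixes F G :: "'k::field vec \<Rightarrow> 'k vec"
  shows "linear_on m n F \<Longrightarrow> linear_on m n' G \<Longrightarrow> linear_on m (n + n') (\<lambda>v. vconcat n (F v) (G v))"
  by (simp add: linear_on_def vconcat_in_space vconcat_add vconcat_scale)

lemma linear_on_vleft: "linear_on (m + n) m (vleft m :: 'k::field vec \<Rightarrow> 'k vec)"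
  by (simp add: linear_on_def vleft_in_space vleft_add vleft_scale)

lemma linear_on_vright: "linear_on (m + n) n (vright m :: 'k::field vec \<Rightarrow> 'k vec)"
  by (simp add: linear_on_def vright_in_space vright_add vright_scale)

lemma linear_on_eq_on_space:
  fixes F G :: "'k::field vec \<Rightarrow> 'k vec"
  assumes F: "linear_on m n F" and G: "linear_on m n' G"
    and basis: "\<And>h. 1 \<le> h \<Longrightarrow> h \<le> m \<Longrightarrow> F (basis_vec h) = G (basis_vec h)"
    and v: "v \<in> space m"
  shows "F v = G v"
proof -
  have "w \<in> space l \<Longrightarrow> l \<le> m \<Longrightarrow> F w = G w" for l w
  proof (induction l arbitrary: w)
    case 0
    then have w: "w = (\<lambda>h. 0 * w h)" "w \<in> space m"
      by (auto simp: space_def intro: space_mono)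
    show ?case
      using F G w unfolding linear_on_def by (metis (no_types) mult_zero_left)
  next
    case (Suc l)
    define w' where "w' = w(Suc l := 0)"
    define e where "e = (\<lambda>h. w (Suc l) * basis_vec (Suc l) h)"
    have split: "w = (\<lambda>h. w' h + e h)"
      by (auto simp: w'_def e_def basis_vec_def)
    have w': "w' \<in> space l" "w' \<in> space m"
      using Suc.prems by (auto simp: space_def w'_def)
    have b: "basis_vec (Suc l) \<in> space m"
      using Suc.prems by (auto simp: space_def basis_vec_def)
    then have e: "e \<in> space m"
      by (auto simp: space_def e_def)
    have "F e = G e"
      using F G b basis[of "Suc l"] Suc.prems unfolding linear_on_def e_def by auto
    moreover have "F w' = G w'"
      using Suc.IH w' Suc.prems by simp
    ultimately show ?case
      using F G w' e unfolding linear_on_def split by metis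
  qed
  then show ?thesis
    using v by blast
qed

lemma vshift_basis_agree:
  fixes F :: "'k::field vec \<Rightarrow> 'k vec"
  assumes commute: "\<And>v. v \<in> space r \<Longrightarrow> F (vshift 1 v) = vshift 1 (F v)"
    and top: "F (basis_vec r) = vshift k (basis_vec r)"
    and h: "1 \<le> h" "h \<le> r"
  shows "F (basis_vec h) = vshift k (basis_vec h)"
  using h(2)
proof (induction h rule: inc_induct)
  case (step n)
  have n: "vshift 1 (basis_vec (Suc n)) = basis_vec n"
    using h(1) step.hyps vshift_basis_vec[of n 1] by simp
  have "basis_vec (Suc n) \<in> space r"
    using step.hyps by (auto simp: space_def basis_vec_def)
  then have "F (basis_vec n) = vshift 1 (F (basis_vec (Suc n)))"
    using commute n by metis
  also have "\<dots> = vshift k (vshift 1 (basis_vec (Suc n)))"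
    using step.IH by (simp add: vshift_vshift add.commute)
  finally show ?case
    by (simp only: n)
qed (rule top)

section \<open>The modules \<Delta>(J)\<close>

definition standard :: "nat set \<Rightarrow> bool" where
  "standard J \<longleftrightarrow> (\<forall>j\<in>J. Suc j \<notin> J)"

lemma rdim_Delta [simp]: "rdim (Delta J) i = card {j \<in> J. j \<le> i}"
  and ralpha_Delta [simp]: "ralpha (Delta J) i v = v"
  and rbeta_Delta [simp]: "rbeta (Delta J) i v = vshift 1 v"
  by (simp_all add: Delta_def vshift_def fun_eq_iff)

lemma card_le_mono: "i \<le> i' \<Longrightarrow> card {j \<in> A. j \<le> i} \<le> card {j \<in> A. j \<le> (i'::nat)}"
  by (rule card_mono) auto

lemma card_le_Un_disjoint:
  "A \<inter> B = {} \<Longrightarrow> card {j \<in> A \<union> B. j \<le> i} = card {j \<in> A. j \<le> i} + card {j \<in> B. j \<le> (i::nat)}"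
  by (subst card_Un_disjoint[symmetric]) (auto intro: arg_cong[where f = card])

lemma standard_card_le_add_2:
  assumes "standard A"
  shows "card {a \<in> A. a \<le> j + 2} \<le> card {a \<in> A. a \<le> j} + 1"
proof -
  have "{a \<in> A. a \<le> j + 2} = {a \<in> A. a \<le> j} \<union> (A \<inter> {Suc j, j + 2})"
    by auto
  then have "card {a \<in> A. a \<le> j + 2} \<le> card {a \<in> A. a \<le> j} + card (A \<inter> {Suc j, j + 2})"
    by (metis card_Un_le)
  moreover have "card (A \<inter> {Suc j, j + 2}) \<le> 1"
    using assms unfolding standard_def by (cases "Suc j \<in> A") (auto simp: card_le_Suc0_iff_eq)
  ultimately show ?thesis
    by linarith
qed

lemma rep_hom_DeltaI:
  fixes F :: "'k::field vec \<Rightarrow> 'k vec"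
  assumes "\<And>i v. i \<in> {1..t} \<Longrightarrow> v \<in> space (card {a \<in> A. a \<le> i}) \<Longrightarrow>
      F v \<in> space (card {b \<in> B. b \<le> i})"
    and "\<And>u v. F (\<lambda>h. u h + v h) = (\<lambda>h. F u h + F v h)"
    and "\<And>c v. F (\<lambda>h. c * v h) = (\<lambda>h. c * F v h)"
    and "\<And>v. F (vshift 1 v) = vshift 1 (F v)"
  shows "rep_hom t (Delta A) (Delta B) (\<lambda>_. F)"
  using assms by (simp add: rep_hom_def linear_on_def)

lemma rep_hom_Delta_vshift:
  assumes "\<And>i. i \<in> {1..t} \<Longrightarrow> card {a \<in> A. a \<le> i} \<le> card {b \<in> B. b \<le> i} + k"
  shows "rep_hom t (Delta A) (Delta B) (\<lambda>_. vshift k :: 'k::field vec \<Rightarrow> 'k vec)"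
  using assms
  by (intro rep_hom_DeltaI) (auto intro: vshift_in_space simp: vshift_add vshift_scale vshift_vshift)

lemma rep_hom_Delta_id:
  assumes "\<And>i. i \<in> {1..t} \<Longrightarrow> card {a \<in> A. a \<le> i} \<le> card {b \<in> B. b \<le> i}"
  shows "rep_hom t (Delta A) (Delta B) (\<lambda>_ v. v :: 'k::field vec)"
  using assms by (intro rep_hom_DeltaI) (auto intro: space_mono)

lemma rep_hom_Delta_eq_top:
  fixes f :: "nat \<Rightarrow> 'k::field vec \<Rightarrow> 'k vec"
  assumes f: "rep_hom t (Delta A) (Delta B) f" and i: "1 \<le> i" "i \<le> t"
    and v: "v \<in> space (card {a \<in> A. a \<le> i})"
  shows "f i v = f t v"
  using i(2)
proof (induction i rule: inc_induct)
  case (step n)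
  have "v \<in> space (card {a \<in> A. a \<le> n})"
    using v step.hyps(1) by (blast intro: space_mono card_le_mono)
  then have "f (Suc n) v = f n v"
    using f i(1) step.hyps unfolding rep_hom_def by simp
  then show ?case
    using step.IH by simp
qed simp

lemma rep_hom_Delta_top_vshift:
  fixes f :: "nat \<Rightarrow> 'k::field vec \<Rightarrow> 'k vec"
  assumes f: "rep_hom t (Delta A) (Delta B) f" and t: "3 \<le> t"
    and no_top: "card {a \<in> A. a \<le> t - 2} = card {a \<in> A. a \<le> t}"
    and v: "v \<in> space (card {a \<in> A. a \<le> t})"
  shows "f t (vshift 1 v) = vshift 1 (f t v)"
proof -
  have beta: "f j (vshift 1 w) = vshift 1 (f (j + 2) w)"
    if "1 \<le> j" "j + 2 \<le> t" "w \<in> space (card {a \<in> A. a \<le> j + 2})" for j w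
    using f that unfolding rep_hom_def by simp
  have t2: "t - 2 + 2 = t"
    using t by simp
  have "f (t - 2) (vshift 1 v) = vshift 1 (f t v)"
    using beta[of "t - 2" v, unfolded t2] t v by simp
  moreover have "vshift 1 v \<in> space (card {a \<in> A. a \<le> t - 2})"
    using v no_top by (auto intro: vshift_in_space)
  then have "f (t - 2) (vshift 1 v) = f t (vshift 1 v)"
    using t by (intro rep_hom_Delta_eq_top[OF f]) auto
  ultimately show ?thesis
    by simp
qed

lemma rep_hom_Delta_eq_vshift:
  fixes f :: "nat \<Rightarrow> 'k::field vec \<Rightarrow> 'k vec"
  assumes f: "rep_hom t (Delta A) (Delta B) f" and t: "3 \<le> t"
    and no_top: "card {a \<in> A. a \<le> t - 2} = card {a \<in> A. a \<le> t}"
    and top: "f t (basis_vec (card {a \<in> A. a \<le> t})) = vshift k (basis_vec (card {a \<in> A. a \<le> t}))"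
    and i: "i \<in> {1..t}" and v: "v \<in> space (card {a \<in> A. a \<le> i})"
  shows "f i v = vshift k v"
proof -
  let ?r = "card {a \<in> A. a \<le> t}"
  have "linear_on ?r (card {b \<in> B. b \<le> t}) (f t)"
    using f t unfolding rep_hom_def by simp
  moreover have "linear_on ?r ?r (vshift k :: 'k vec \<Rightarrow> 'k vec)"
    unfolding linear_on_def by (auto intro: vshift_in_space simp: vshift_add vshift_scale)
  moreover have "f t (basis_vec h) = vshift k (basis_vec h)" if "1 \<le> h" "h \<le> ?r" for h
    using rep_hom_Delta_top_vshift[OF f t no_top] top that by (rule vshift_basis_agree)
  moreover have "v \<in> space ?r"
    using v i by (auto intro: space_mono card_le_mono)
  ultimately have "f t v = vshift k v"
    by (rule linear_on_eq_on_space)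
  then show ?thesis
    using rep_hom_Delta_eq_top[OF f _ _ v] i by simp
qed

section \<open>Direct sums\<close>

lemma rdim_dsum [simp]: "rdim (dsum M N) i = rdim M i + rdim N i"
  and ralpha_dsum [simp]: "ralpha (dsum M N) i x =
    vconcat (rdim M (i + 1)) (ralpha M i (vleft (rdim M i) x)) (ralpha N i (vright (rdim M i) x))"
  and rbeta_dsum [simp]: "rbeta (dsum M N) j x =
    vconcat (rdim M j) (rbeta M j (vleft (rdim M (j + 2)) x)) (rbeta N j (vright (rdim M (j + 2)) x))"
  by (simp_all add: dsum_def)

lemma rep_hom_hom_pair:
  fixes f g :: "nat \<Rightarrow> 'k::field vec \<Rightarrow> 'k vec"
  assumes f: "rep_hom t M N f" and g: "rep_hom t M N' g"
  shows "rep_hom t M (dsum N N') (hom_pair N f g)"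
proof -
  have in_space: "f i v \<in> space (rdim N i)" "g i v \<in> space (rdim N' i)"
    if "i \<in> {1..t}" "v \<in> space (rdim M i)" for i v
    using f g that unfolding rep_hom_def linear_on_def by blast+
  have parts: "vleft (rdim N i) (hom_pair N f g i v) = f i v"
      "vright (rdim N i) (hom_pair N f g i v) = g i v"
    if "i \<in> {1..t}" "v \<in> space (rdim M i)" for i v
    using in_space[OF that] space_zero[OF in_space(2)[OF that]]
    by (simp_all add: hom_pair_def vleft_vconcat vright_vconcat)
  show ?thesis
    unfolding rep_hom_def
  proof (intro conjI ballI allI impI)
    fix i assume i: "i \<in> {1..t}"
    then show "linear_on (rdim M i) (rdim (dsum N N') i) (hom_pair N f g i)"
      using f g unfolding rep_hom_def hom_pair_def by (simp add: linear_on_vconcat)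
  next
    fix i and v :: "'k vec" assume "1 \<le> i \<and> i + 1 \<le> t" "v \<in> space (rdim M i)"
    then show "hom_pair N f g (i + 1) (ralpha M i v) = ralpha (dsum N N') i (hom_pair N f g i v)"
      using f g parts[of i v] unfolding rep_hom_def by (simp add: hom_pair_def)
  next
    fix j and v :: "'k vec" assume "1 \<le> j \<and> j + 2 \<le> t" "v \<in> space (rdim M (j + 2))"
    then show "hom_pair N f g j (rbeta M j v) = rbeta (dsum N N') j (hom_pair N f g (j + 2) v)"
      using f g parts[of "j + 2" v] unfolding rep_hom_def by (simp add: hom_pair_def)
  qed
qed

lemma hom_injective_hom_pair:
  fixes f g :: "nat \<Rightarrow> 'k::field vec \<Rightarrow> 'k vec"
  assumes g: "rep_hom t M N' g" "hom_injective t M g"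
  shows "hom_injective t M (hom_pair N f g)"
  unfolding hom_injective_def
proof (intro ballI inj_onI)
  fix i u v assume i: "i \<in> {1..t}" and uv: "u \<in> space (rdim M i)" "v \<in> space (rdim M i)"
    and eq: "hom_pair N f g i u = hom_pair N f g i v"
  have "g i u \<in> space (rdim N' i)" "g i v \<in> space (rdim N' i)"
    using g(1) i uv unfolding rep_hom_def linear_on_def by blast+
  then have "g i u = g i v"
    using arg_cong[OF eq, of "vright (rdim N i)"] by (simp add: hom_pair_def vright_vconcat space_zero)
  then show "u = v"
    using g(2) i uv unfolding hom_injective_def inj_on_def by blast
qed

definition hom_copair_diff :: "'k::ab_group_add rep \<Rightarrow> (nat \<Rightarrow> 'k vec \<Rightarrow> 'k vec) \<Rightarrow>
    (nat \<Rightarrow> 'k vec \<Rightarrow> 'k vec) \<Rightarrow> nat \<Rightarrow> 'k vec \<Rightarrow> 'k vec" where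
  "hom_copair_diff M f g = (\<lambda>i x h. g i (vright (rdim M i) x) h - f i (vleft (rdim M i) x) h)"

lemma rep_hom_hom_copair_diff:
  fixes f g :: "nat \<Rightarrow> 'k::field vec \<Rightarrow> 'k vec"
  assumes f: "rep_hom t (Delta A) (Delta C) f" and g: "rep_hom t (Delta B) (Delta C) g"
    and A: "standard A"
  shows "rep_hom t (dsum (Delta A) (Delta B)) (Delta C) (hom_copair_diff (Delta A) f g)"
proof -
  let ?a = "\<lambda>i. card {j \<in> A. j \<le> i}" and ?b = "\<lambda>i. card {j \<in> B. j \<le> i}"
  have left: "vleft (?a i) x \<in> space (?a i)" and right: "vright (?a i) x \<in> space (?b i)"
    if "x \<in> space (?a i + ?b i)" for i and x :: "'k vec"
    using that by (simp_all add: vleft_in_space vright_in_space)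
  show ?thesis
    unfolding rep_hom_def rdim_dsum rdim_Delta
  proof (intro conjI ballI allI impI)
    fix i assume i: "i \<in> {1..t}"
    have "linear_on (?a i + ?b i) (card {j \<in> C. j \<le> i}) (f i \<circ> vleft (?a i))"
      "linear_on (?a i + ?b i) (card {j \<in> C. j \<le> i}) (g i \<circ> vright (?a i))"
      using f g i unfolding rep_hom_def by (auto intro: linear_on_comp linear_on_vleft linear_on_vright)
    then show "linear_on (?a i + ?b i) (card {j \<in> C. j \<le> i}) (hom_copair_diff (Delta A) f g i)"
      unfolding hom_copair_diff_def using linear_on_diff by fastforce
  next
    fix i and x :: "'k vec" assume i: "1 \<le> i \<and> i + 1 \<le> t" and x: "x \<in> space (?a i + ?b i)"
    have "vleft (?a i) x \<in> space (?a (i + 1))"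
      by (rule space_mono[OF left[OF x]]) (simp add: card_le_mono)
    then show "hom_copair_diff (Delta A) f g (i + 1) (ralpha (dsum (Delta A) (Delta B)) i x) =
        ralpha (Delta C) i (hom_copair_diff (Delta A) f g i x)"
      using f g i left[OF x] right[OF x] unfolding rep_hom_def
      by (simp add: hom_copair_diff_def vleft_vconcat vright_vconcat space_zero[OF right[OF x]])
  next
    fix j and x :: "'k vec" assume j: "1 \<le> j \<and> j + 2 \<le> t" and x: "x \<in> space (?a (j + 2) + ?b (j + 2))"
    have "vshift 1 (vleft (?a (j + 2)) x) \<in> space (?a j)"
      using left[OF x] standard_card_le_add_2[OF A, of j] by (auto intro: vshift_in_space)
    then show "hom_copair_diff (Delta A) f g j (rbeta (dsum (Delta A) (Delta B)) j x) =
        rbeta (Delta C) j (hom_copair_diff (Delta A) f g (j + 2) x)"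
      using f g j left[OF x] right[OF x] unfolding rep_hom_def
      by (simp add: hom_copair_diff_def vleft_vconcat vright_vconcat vshift_diff)
  qed
qed

text \<open>
  In the two lemmas below p, q, q + e and p + e play the roles of the dimensions of
  P(b-1), P(b), P(c) and T at one vertex.
\<close>

lemma vshift_copair_kernel:
  fixes p q e k :: nat
  assumes q: "q \<le> p + k" and top: "0 < e \<Longrightarrow> q = p + k"
  shows "{x \<in> space (p + (q + e)). (\<lambda>h. vshift k (vright p x) h - vleft p x h) = (\<lambda>_. 0 :: 'k::ab_group_add)}
    = (\<lambda>v. vconcat p (vshift k v) v) ` space q"
proof (intro equalityI subsetI)
  fix x :: "'k vec"
  assume "x \<in> {x \<in> space (p + (q + e)). (\<lambda>h. vshift k (vright p x) h - vleft p x h) = (\<lambda>_. 0)}"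
  then have x: "x \<in> space (p + (q + e))" and u: "vleft p x = vshift k (vright p x)"
    by (auto simp: fun_eq_iff)
  have w: "vright p x \<in> space (q + e)"
    using x by (rule vright_in_space)
  have "vright p x \<in> space q"
  proof (cases "e = 0")
    case False
    have "vright p x h = 0" if "q < h" for h
    proof -
      have "vright p x h = vshift k (vright p x) (h - k)"
        using that top False by (simp add: vshift_def)
      also have "\<dots> = 0"
        using that top False vleft_in_space[of p x] by (simp add: u[symmetric] space_def)
      finally show ?thesis .
    qed
    then show ?thesis
      using w by (simp add: space_def)
  qed (use w in simp)
  moreover have "x = vconcat p (vshift k (vright p x)) (vright p x)"
    using x by (simp add: u[symmetric] vconcat_vleft_vright space_zero)
  ultimately show "x \<in> (\<lambda>v. vconcat p (vshift k v) v) ` space q"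
    by blast
next
  fix x :: "'k vec"
  assume "x \<in> (\<lambda>v. vconcat p (vshift k v) v) ` space q"
  then obtain v where v: "v \<in> space q" and x: "x = vconcat p (vshift k v) v"
    by blast
  have "vshift k v \<in> space p"
    using v q by (rule vshift_in_space)
  moreover have "v \<in> space (q + e)"
    using v by (rule space_mono) simp
  ultimately show "x \<in> {x \<in> space (p + (q + e)). (\<lambda>h. vshift k (vright p x) h - vleft p x h) = (\<lambda>_. 0)}"
    using space_zero[OF v] by (simp add: x vconcat_in_space vleft_vconcat vright_vconcat)
qed

lemma vshift_copair_image:
  fixes p q e k :: nat
  assumes q: "q \<le> p + k" and top: "0 < e \<Longrightarrow> q = p + k"
  shows "(\<lambda>x h. vshift k (vright p x) h - vleft p x h) ` space (p + (q + e)) = (space (p + e) :: 'k::ab_group_add vec set)"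
proof (intro equalityI subsetI)
  fix z :: "'k vec"
  assume "z \<in> (\<lambda>x h. vshift k (vright p x) h - vleft p x h) ` space (p + (q + e))"
  then obtain x where x: "x \<in> space (p + (q + e))" and z: "z = (\<lambda>h. vshift k (vright p x) h - vleft p x h)"
    by blast
  have "vshift k (vright p x) \<in> space (p + e)"
    using vright_in_space[OF x] q by (auto intro: vshift_in_space)
  moreover have "vleft p x \<in> space (p + e)"
    using vleft_in_space by (rule space_mono) simp
  ultimately show "z \<in> space (p + e)"
    by (simp add: z space_def)
next
  fix z :: "'k vec"
  assume z: "z \<in> space (p + e)"
  show "z \<in> (\<lambda>x h. vshift k (vright p x) h - vleft p x h) ` space (p + (q + e))"
  proof (cases "e = 0")
    case True
    let ?x = "vconcat p (\<lambda>h. - z h) (\<lambda>_. 0)"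
    have "?x \<in> space (p + (q + e))" and "z = (\<lambda>h. vshift k (vright p ?x) h - vleft p ?x h)"
      using z True by (auto simp: space_def vconcat_def vleft_def vright_def vshift_def)
    then show ?thesis
      by blast
  next
    case False
    let ?x = "vconcat p (\<lambda>_. 0) (\<lambda>h. if k < h then z (h - k) else 0)"
    have "?x \<in> space (p + (q + e))" and "z = (\<lambda>h. vshift k (vright p ?x) h - vleft p ?x h)"
      using z top False by (auto simp: space_def vconcat_def vleft_def vright_def vshift_def)
    then show ?thesis
      by blast
  qed
qed

section \<open>Parity sets and the projectives P(m)\<close>

definition parity_set :: "nat \<Rightarrow> nat set" where
  "parity_set m = {i. 1 \<le> i \<and> i \<le> m \<and> i mod 2 = m mod 2}"

lemma Proj_eq_Delta: "Proj m = Delta (parity_set m)"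
  by (simp add: Proj_def parity_set_def)

lemma standard_parity_set: "standard (parity_set m)"
  unfolding standard_def parity_set_def by auto presburger

lemma card_parity_set_le: "card {j \<in> parity_set m. j \<le> i} = (min i m + m mod 2) div 2"
proof (induction i)
  case 0
  then show ?case by (simp add: parity_set_def)
next
  case (Suc i)
  have "{j \<in> parity_set m. j \<le> Suc i} = {j \<in> parity_set m. j \<le> i} \<union> (parity_set m \<inter> {Suc i})"
    by auto
  then have "card {j \<in> parity_set m. j \<le> Suc i} =
      card {j \<in> parity_set m. j \<le> i} + (if Suc i \<in> parity_set m then 1 else 0)"
    by (simp add: card_le_Un_disjoint[symmetric] Int_insert_right)
  moreover have "(min (Suc i) m + m mod 2) div 2 =
      (min i m + m mod 2) div 2 + (if Suc i \<in> parity_set m then 1 else 0)"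
  proof (cases "Suc i \<le> m")
    case True
    have "Suc i \<in> parity_set m \<longleftrightarrow> odd (i + m mod 2)"
      using True by (simp add: parity_set_def) presburger
    then show ?thesis
      using True by (cases "even (i + m mod 2)") (simp_all add: min_def odd_succ_div_two even_succ_div_two)
  next
    case False
    then have "min (Suc i) m = m" "min i m = m"
      by auto
    with False show ?thesis
      by (simp add: parity_set_def)
  qed
  ultimately show ?case
    using Suc.IH by simp
qed

lemma parity_set_le_eq: "m \<le> i \<Longrightarrow> {j \<in> parity_set m. j \<le> i} = parity_set m"
  by (auto simp: parity_set_def)

lemma parity_set_extend:
  "b \<le> c \<Longrightarrow> c mod 2 = b mod 2 \<Longrightarrow>
    parity_set c = parity_set b \<union> {j. b < j \<and> j \<le> c \<and> j mod 2 = b mod 2}"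
  by (auto simp: parity_set_def)

lemma card_parity_set_pred_le:
  assumes "1 \<le> b"
  shows "card {j \<in> parity_set b. j \<le> i} \<le> card {j \<in> parity_set (b - 1). j \<le> i} + b mod 2"
    and "b \<le> i \<Longrightarrow> card {j \<in> parity_set b. j \<le> i} = card {j \<in> parity_set (b - 1). j \<le> i} + b mod 2"
proof -
  obtain n where n: "b = Suc n"
    using assms by (cases b) auto
  have high: "card {j \<in> parity_set (Suc n). j \<le> i} = card {j \<in> parity_set n. j \<le> i} + Suc n mod 2"
    if "Suc n \<le> i"
  proof -
    have "min i (Suc n) = Suc n" "min i n = n"
      using that by auto
    then show ?thesis
      unfolding card_parity_set_le by (cases "even n") (auto elim!: evenE oddE)
  qed
  have low: "card {j \<in> parity_set (Suc n). j \<le> i} \<le> card {j \<in> parity_set n. j \<le> i} + Suc n mod 2"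
    if "i \<le> n"
  proof -
    have "min i (Suc n) = i" "min i n = i"
      using that by auto
    then show ?thesis
      unfolding card_parity_set_le by (cases "even n") (auto simp: odd_succ_div_two even_succ_div_two)
  qed
  show "card {j \<in> parity_set b. j \<le> i} \<le> card {j \<in> parity_set (b - 1). j \<le> i} + b mod 2"
    using high low by (cases "i \<le> n") (auto simp: n)
  show "b \<le> i \<Longrightarrow> card {j \<in> parity_set b. j \<le> i} = card {j \<in> parity_set (b - 1). j \<le> i} + b mod 2"
    using high by (simp add: n)
qed

lemma rdim_Proj_pred_top:
  assumes "2 \<le> b" "b \<le> t"
  shows "rdim (Proj b :: 'k::field rep) t = rdim (Proj (b - 1) :: 'k rep) t + b mod 2"
    and "1 \<le> rdim (Proj (b - 1) :: 'k::field rep) t"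
proof -
  show "rdim (Proj b :: 'k::field rep) t = rdim (Proj (b - 1) :: 'k rep) t + b mod 2"
    using assms by (simp add: Proj_eq_Delta card_parity_set_pred_le)
  define n where "n = b - 1"
  have "1 \<le> n"
    using assms by (simp add: n_def)
  then have "1 \<le> (n + n mod 2) div 2"
    by (cases "even n") (auto elim!: evenE oddE)
  then show "1 \<le> rdim (Proj (b - 1) :: 'k::field rep) t"
    using assms by (simp add: Proj_eq_Delta card_parity_set_le min_def n_def)
qed

lemma parity_J_dims:
  assumes "1 \<le> b" "b \<le> c" "c mod 2 = b mod 2"
    and J: "J = parity_set (b - 1) \<union> {j. b < j \<and> j \<le> c \<and> j mod 2 = b mod 2}"
  obtains e where "card {j \<in> parity_set c. j \<le> i} = card {j \<in> parity_set b. j \<le> i} + e"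
    and "card {j \<in> J. j \<le> i} = card {j \<in> parity_set (b - 1). j \<le> i} + e"
    and "card {j \<in> parity_set b. j \<le> i} \<le> card {j \<in> parity_set (b - 1). j \<le> i} + b mod 2"
    and "0 < e \<Longrightarrow> card {j \<in> parity_set b. j \<le> i} = card {j \<in> parity_set (b - 1). j \<le> i} + b mod 2"
proof
  let ?E = "{j. b < j \<and> j \<le> c \<and> j mod 2 = b mod 2}"
  have "parity_set b \<inter> ?E = {}" "parity_set (b - 1) \<inter> ?E = {}"
    by (auto simp: parity_set_def)
  then show "card {j \<in> parity_set c. j \<le> i} = card {j \<in> parity_set b. j \<le> i} + card {j \<in> ?E. j \<le> i}"
    and "card {j \<in> J. j \<le> i} = card {j \<in> parity_set (b - 1). j \<le> i} + card {j \<in> ?E. j \<le> i}"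
    unfolding J parity_set_extend[OF assms(2,3)] by (simp_all only: card_le_Un_disjoint)
  show "card {j \<in> parity_set b. j \<le> i} \<le> card {j \<in> parity_set (b - 1). j \<le> i} + b mod 2"
    using assms(1) by (rule card_parity_set_pred_le)
  assume "0 < card {j \<in> ?E. j \<le> i}"
  then have "b \<le> i"
    by (auto simp: card_gt_0_iff)
  then show "card {j \<in> parity_set b. j \<le> i} = card {j \<in> parity_set (b - 1). j \<le> i} + b mod 2"
    using assms(1) by (intro card_parity_set_pred_le)
qed

section \<open>The resolution\<close>

lemma vshift_basis_Proj_top:
  assumes "2 \<le> b" "b \<le> t"
  shows "vshift (b mod 2) (basis_vec (rdim (Proj b :: 'k::field rep) t)) =
    (basis_vec (rdim (Proj (b - 1) :: 'k rep) t) :: 'k vec)"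
  using assms rdim_Proj_pred_top[of b t, where 'k = 'k] by (simp add: vshift_basis_vec)

lemma Proj_resolution_homs:
  assumes b: "1 \<le> b" and c: "b \<le> c" "c mod 2 = b mod 2"
  shows "rep_hom t (Proj b) (Proj (b - 1)) (\<lambda>_. vshift (b mod 2) :: 'k::field vec \<Rightarrow> 'k vec)"
    and "rep_hom t (Proj b) (Proj c) (\<lambda>_ v. v :: 'k::field vec)"
proof -
  show "rep_hom t (Proj b) (Proj (b - 1)) (\<lambda>_. vshift (b mod 2) :: 'k::field vec \<Rightarrow> 'k vec)"
    unfolding Proj_eq_Delta using b by (intro rep_hom_Delta_vshift card_parity_set_pred_le)
  have "card {j \<in> parity_set b. j \<le> i} \<le> card {j \<in> parity_set c. j \<le> i}" for i
    using c by (intro card_mono) (auto simp: parity_set_extend)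
  then show "rep_hom t (Proj b) (Proj c) (\<lambda>_ v. v :: 'k::field vec)"
    unfolding Proj_eq_Delta by (intro rep_hom_Delta_id)
qed

lemma Proj_hom_eq_vshift:
  fixes f :: "nat \<Rightarrow> 'k::field vec \<Rightarrow> 'k vec"
  assumes b: "1 \<le> b" "b + 2 \<le> t" and f: "rep_hom t (Proj b) (Proj m) f"
    and top: "f t (basis_vec (rdim (Proj b :: 'k rep) t)) = vshift k (basis_vec (rdim (Proj b :: 'k rep) t))"
    and i: "i \<in> {1..t}" and v: "v \<in> space (rdim (Proj b :: 'k rep) i)"
  shows "f i v = vshift k v"
proof (rule rep_hom_Delta_eq_vshift)
  show "rep_hom t (Delta (parity_set b)) (Delta (parity_set m)) f"
    using f by (simp only: Proj_eq_Delta)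
  show "card {j \<in> parity_set b. j \<le> t - 2} = card {j \<in> parity_set b. j \<le> t}"
    using b by (simp add: parity_set_le_eq)
qed (use b top i v in \<open>simp_all add: Proj_eq_Delta\<close>)

lemma Proj_cokernel_map:
  assumes b: "1 \<le> b" and c: "b \<le> c" "c mod 2 = b mod 2"
    and J: "J = parity_set (b - 1) \<union> {j. b < j \<and> j \<le> c \<and> j mod 2 = b mod 2}"
  defines "g \<equiv> hom_copair_diff (Proj (b - 1)) (\<lambda>_ v. v) (\<lambda>_. vshift (b mod 2) :: 'k::field vec \<Rightarrow> 'k vec)"
  shows "rep_hom t (dsum (Proj (b - 1)) (Proj c)) (Delta J) g"
    and "hom_surjective t (dsum (Proj (b - 1)) (Proj c)) (Delta J) g"
    and "{x \<in> space (rdim (dsum (Proj (b - 1)) (Proj c)) i). g i x = (\<lambda>_. 0)} =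
      (\<lambda>v. vconcat (rdim (Proj (b - 1) :: 'k rep) i) (vshift (b mod 2) v) v) ` space (rdim (Proj b :: 'k rep) i)"
proof -
  let ?\<delta> = "b mod 2"
  let ?p = "\<lambda>i. card {j \<in> parity_set (b - 1). j \<le> i}" and ?q = "\<lambda>i. card {j \<in> parity_set b. j \<le> i}"
    and ?c = "\<lambda>i. card {j \<in> parity_set c. j \<le> i}"
  have dims: "\<exists>e. ?c i = ?q i + e \<and> card {j \<in> J. j \<le> i} = ?p i + e \<and>
      ?q i \<le> ?p i + ?\<delta> \<and> (0 < e \<longrightarrow> ?q i = ?p i + ?\<delta>)" for i
    by (rule parity_J_dims[OF b c J, where i = i]) blast
  have "?p i \<le> card {j \<in> J. j \<le> i}" "?c i \<le> card {j \<in> J. j \<le> i} + ?\<delta>" for i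
    using dims[of i] by auto
  then show "rep_hom t (dsum (Proj (b - 1)) (Proj c)) (Delta J) g"
    unfolding g_def Proj_eq_Delta
    by (intro rep_hom_hom_copair_diff rep_hom_Delta_id rep_hom_Delta_vshift standard_parity_set)
  show "hom_surjective t (dsum (Proj (b - 1)) (Proj c)) (Delta J) g"
    unfolding hom_surjective_def
  proof
    fix i
    obtain e where "?c i = ?q i + e" "card {j \<in> J. j \<le> i} = ?p i + e"
      "?q i \<le> ?p i + ?\<delta>" "0 < e \<Longrightarrow> ?q i = ?p i + ?\<delta>"
      using dims by blast
    then show "g i ` space (rdim (dsum (Proj (b - 1)) (Proj c)) i) = space (rdim (Delta J :: 'k rep) i)"
      using vshift_copair_image[of "?q i" "?p i" ?\<delta> e, where 'k = 'k]
      by (simp add: g_def hom_copair_diff_def Proj_eq_Delta)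
  qed
  obtain e where "?c i = ?q i + e" "?q i \<le> ?p i + ?\<delta>" "0 < e \<Longrightarrow> ?q i = ?p i + ?\<delta>"
    using dims by blast
  then show "{x \<in> space (rdim (dsum (Proj (b - 1)) (Proj c)) i). g i x = (\<lambda>_. 0)} =
      (\<lambda>v. vconcat (rdim (Proj (b - 1) :: 'k rep) i) (vshift ?\<delta> v) v) ` space (rdim (Proj b :: 'k rep) i)"
    using vshift_copair_kernel[of "?q i" "?p i" ?\<delta> e, where 'k = 'k]
    by (simp add: g_def hom_copair_diff_def Proj_eq_Delta)
qed

lemma Proj_resolution_exact:
  fixes \<phi>1 \<phi>2 :: "nat \<Rightarrow> 'k::field vec \<Rightarrow> 'k vec"
  assumes b: "2 \<le> b" "b + 2 \<le> t" and c: "b \<le> c" "c mod 2 = b mod 2"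
    and J: "J = parity_set (b - 1) \<union> {j. b < j \<and> j \<le> c \<and> j mod 2 = b mod 2}"
    and \<phi>1: "rep_hom t (Proj b) (Proj (b - 1)) \<phi>1"
      "\<phi>1 t (basis_vec (rdim (Proj b :: 'k rep) t)) = basis_vec (rdim (Proj (b - 1) :: 'k rep) t)"
    and \<phi>2: "rep_hom t (Proj b) (Proj c) \<phi>2"
      "\<phi>2 t (basis_vec (rdim (Proj b :: 'k rep) t)) = basis_vec (rdim (Proj b :: 'k rep) t)"
  defines "\<psi> \<equiv> hom_pair (Proj (b - 1)) \<phi>1 \<phi>2"
  shows "rep_hom t (Proj b) (dsum (Proj (b - 1)) (Proj c)) \<psi>"
    and "hom_injective t (Proj b) \<psi>"
    and "exact_at t (Proj b) (dsum (Proj (b - 1)) (Proj c)) \<psi>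
      (hom_copair_diff (Proj (b - 1)) (\<lambda>_ v. v) (\<lambda>_. vshift (b mod 2)))"
proof -
  let ?r = "rdim (Proj b :: 'k rep) t"
  have b1: "1 \<le> b"
    using b by simp
  have "\<phi>1 t (basis_vec ?r) = vshift (b mod 2) (basis_vec ?r)"
    using \<phi>1(2) b by (simp add: vshift_basis_Proj_top)
  with b1 b(2) \<phi>1(1) have \<phi>1_eq: "\<phi>1 i v = vshift (b mod 2) v"
    if "i \<in> {1..t}" "v \<in> space (rdim (Proj b :: 'k rep) i)" for i v
    using that by (rule Proj_hom_eq_vshift)
  have \<phi>2_eq: "\<phi>2 i v = v" if "i \<in> {1..t}" "v \<in> space (rdim (Proj b :: 'k rep) i)" for i v
  proof -
    have "1 \<le> ?r"
      using b rdim_Proj_pred_top[of b t, where 'k = 'k] by simp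
    then have "basis_vec ?r \<in> (space ?r :: 'k vec set)"
      by (simp add: space_def basis_vec_def)
    then have "\<phi>2 t (basis_vec ?r) = vshift 0 (basis_vec ?r)"
      using \<phi>2(2) by (simp add: vshift_0)
    with b1 b(2) \<phi>2(1) have "\<phi>2 i v = vshift 0 v"
      using that by (rule Proj_hom_eq_vshift)
    then show ?thesis
      using that(2) by (simp add: vshift_0)
  qed
  show "rep_hom t (Proj b) (dsum (Proj (b - 1)) (Proj c)) \<psi>"
    unfolding \<psi>_def using \<phi>1(1) \<phi>2(1) by (rule rep_hom_hom_pair)
  have "hom_injective t (Proj b) \<phi>2"
    unfolding hom_injective_def using \<phi>2_eq by (auto intro!: inj_onI)
  then show "hom_injective t (Proj b) \<psi>"
    unfolding \<psi>_def by (rule hom_injective_hom_pair[OF \<phi>2(1)])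
  show "exact_at t (Proj b) (dsum (Proj (b - 1)) (Proj c)) \<psi>
      (hom_copair_diff (Proj (b - 1)) (\<lambda>_ v. v) (\<lambda>_. vshift (b mod 2)))"
    unfolding exact_at_def
  proof
    fix i assume "i \<in> {1..t}"
    then have "\<psi> i ` space (rdim (Proj b :: 'k rep) i) =
        (\<lambda>v. vconcat (rdim (Proj (b - 1) :: 'k rep) i) (vshift (b mod 2) v) v) ` space (rdim (Proj b :: 'k rep) i)"
      using \<phi>1_eq \<phi>2_eq by (auto simp: \<psi>_def hom_pair_def)
    then show "{x \<in> space (rdim (dsum (Proj (b - 1)) (Proj c)) i).
        hom_copair_diff (Proj (b - 1)) (\<lambda>_ v. v) (\<lambda>_. vshift (b mod 2)) i x = (\<lambda>_. 0)} =
        \<psi> i ` space (rdim (Proj b :: 'k rep) i)"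
      using Proj_cokernel_map(3)[OF b1 c J, where 'k = 'k] by simp
  qed
qed

section \<open>Thin dimension vectors with one internal even string\<close>

lemma internal_even_end_bounds:
  assumes "thin_dimvec t d" and "b \<in> internal_even_ends t d"
  shows "3 \<le> b" and "b + 2 \<le> t"
proof -
  obtain s where s: "1 < s" "s \<le> b" "b < t" "d (b + 1) = 0" "even (b - s + 1)"
    using assms(2) unfolding internal_even_ends_def by blast
  then have "b - s + 1 \<noteq> 1"
    by (metis odd_one)
  then show "3 \<le> b"
    using s(1,2) by linarith
  have "d t = 1"
    using assms(1) by (simp add: thin_dimvec_def)
  then show "b + 2 \<le> t"
    using s(3,4) by (cases "t = b + 1") auto
qed

lemma internal_even_ends_single:
  assumes "e_num t d = 1"
  shows "internal_even_ends t d = {b_pos t d 1}"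
proof -
  obtain x where "internal_even_ends t d = {x}"
    using assms unfolding e_num_def by (rule card_1_singletonE)
  then show ?thesis
    by (simp add: b_pos_def)
qed

lemma J_set_single:
  assumes "e_num t d = 1" and "b = b_pos t d 1" and "b + 2 \<le> t"
  shows "J_set t d = parity_set (b - 1) \<union> {j. b < j \<and> j \<le> t \<and> j mod 2 = b mod 2}"
proof -
  have J: "J_set t d = {j \<in> {1..t}. (j \<le> b - 1 \<and> j mod 2 = (b - 1) mod 2) \<or>
      (b + 2 \<le> j \<and> j mod 2 = b mod 2)}"
    using assms(1,2) by (simp add: J_set_def Let_def)
  have parity: "b < j \<and> j mod 2 = b mod 2 \<longleftrightarrow> b + 2 \<le> j \<and> j mod 2 = b mod 2" for j :: nat
    by presburger
  show ?thesis
  proof (rule set_eqI)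
    fix j
    show "j \<in> J_set t d \<longleftrightarrow> j \<in> parity_set (b - 1) \<union> {j. b < j \<and> j \<le> t \<and> j mod 2 = b mod 2}"
      unfolding J parity_set_def using parity[of j] assms(3) by auto
  qed
qed

lemma Max_J_set_single:
  assumes "b + 2 \<le> t" and J: "J = parity_set (b - 1) \<union> {j. b < j \<and> j \<le> t \<and> j mod 2 = b mod 2}"
  shows "b \<le> Max J" and "Max J mod 2 = b mod 2"
    and "J = parity_set (b - 1) \<union> {j. b < j \<and> j \<le> Max J \<and> j mod 2 = b mod 2}"
proof -
  have mem: "j \<in> J \<longleftrightarrow> j \<in> parity_set (b - 1) \<or> (b < j \<and> j \<le> t \<and> j mod 2 = b mod 2)" for j
    using J by blast
  have "J \<subseteq> {..t}"
    using assms(1) by (auto simp: mem parity_set_def)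
  then have fin: "finite J"
    by (rule finite_subset) simp
  have "b + 2 \<in> J"
    using assms(1) by (simp add: mem)
  then have "b + 2 \<le> Max J" and "Max J \<in> J"
    using fin by (auto intro: Max_in)
  then have c: "b < Max J" "Max J \<le> t" "Max J mod 2 = b mod 2"
    by (auto simp: mem parity_set_def)
  then show "b \<le> Max J" and "Max J mod 2 = b mod 2"
    by simp_all
  show "J = parity_set (b - 1) \<union> {j. b < j \<and> j \<le> Max J \<and> j mod 2 = b mod 2}"
  proof (rule set_eqI)
    fix j
    show "j \<in> J \<longleftrightarrow> j \<in> parity_set (b - 1) \<union> {j. b < j \<and> j \<le> Max J \<and> j mod 2 = b mod 2}"
      using mem[of j] c(2) Max_ge[OF fin, of j] by auto
  qed
qed

theorem lemma4p3:
  fixes t b :: nat and d :: "nat \<Rightarrow> nat" and K :: "'k::field itself"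
  assumes "alg_closed_type K"
    and "thin_dimvec t d"
    and "e_num t d = 1"
    and "b = b_pos t d 1"
  shows "let J = J_set t d; c = Max J; T = (Delta J :: 'k rep);
             Pb = (Proj b :: 'k rep); Pb1 = (Proj (b - 1) :: 'k rep); Pc = (Proj c :: 'k rep);
             r = rdim Pb t; r1 = rdim Pb1 t;
             good = (\<lambda>\<phi>1 \<phi>2. rep_hom t Pb Pb1 \<phi>1 \<and> rep_hom t Pb Pc \<phi>2 \<and>
                        \<phi>1 t (basis_vec r) = basis_vec r1 \<and> \<phi>2 t (basis_vec r) = basis_vec r)
         in (\<exists>\<phi>1 \<phi>2. good \<phi>1 \<phi>2) \<and>
            (\<forall>\<phi>1 \<phi>2. good \<phi>1 \<phi>2 \<longrightarrow>
               (let \<psi> = hom_pair Pb1 \<phi>1 \<phi>2 in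
                 rep_hom t Pb (dsum Pb1 Pc) \<psi> \<and> hom_injective t Pb \<psi> \<and>
                 (\<exists>g. rep_hom t (dsum Pb1 Pc) T g \<and> hom_surjective t (dsum Pb1 Pc) T g \<and>
                      exact_at t Pb (dsum Pb1 Pc) \<psi> g)))"
proof -
  have b_end: "b \<in> internal_even_ends t d"
    using assms(3,4) internal_even_ends_single by blast
  have b: "2 \<le> b" "b + 2 \<le> t" and b1: "1 \<le> b" and bt: "b \<le> t"
    using internal_even_end_bounds[OF assms(2) b_end] by simp_all
  have J: "J_set t d = parity_set (b - 1) \<union> {j. b < j \<and> j \<le> t \<and> j mod 2 = b mod 2}"
    using assms(3,4) b(2) by (rule J_set_single)
  define c where "c = Max (J_set t d)"
  have c: "b \<le> c" "c mod 2 = b mod 2"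
    and Jc: "J_set t d = parity_set (b - 1) \<union> {j. b < j \<and> j \<le> c \<and> j mod 2 = b mod 2}"
    unfolding c_def using Max_J_set_single[OF b(2) J] by simp_all
  note existence = Proj_resolution_homs[OF b1 c, where 'k = 'k] vshift_basis_Proj_top[OF b(1) bt, where 'k = 'k]
  note resolution = Proj_resolution_exact[OF b c Jc] Proj_cokernel_map(1,2)[OF b1 c Jc, where 'k = 'k]
  show ?thesis
    unfolding Let_def c_def[symmetric]
  proof (intro conjI allI impI)
    show "\<exists>\<phi>1 \<phi>2. rep_hom t (Proj b :: 'k rep) (Proj (b - 1)) \<phi>1 \<and> rep_hom t (Proj b :: 'k rep) (Proj c) \<phi>2 \<and>
        \<phi>1 t (basis_vec (rdim (Proj b :: 'k rep) t)) = basis_vec (rdim (Proj (b - 1) :: 'k rep) t) \<and>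
        \<phi>2 t (basis_vec (rdim (Proj b :: 'k rep) t)) = basis_vec (rdim (Proj b :: 'k rep) t)"
      by (rule exI[of _ "\<lambda>_::nat. vshift (b mod 2) :: 'k vec \<Rightarrow> 'k vec"],
          rule exI[of _ "\<lambda>(_::nat) (v::'k vec). v"]) (intro conjI existence refl)
  qed (elim conjE, (intro exI conjI)?, (rule resolution; assumption)+)+
qed

end
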